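(* Let $\mathcal{A}\subset\mathbb{C}^n$ be a set of atoms whose convex hull is compact, centrally symmetric, and contains a ball of positive radius around the origin. Let $x^\star,w\in\mathbb{C}^n$, $y=x^\star+w$, and let $\tau>\|w\|_{\mathcal{A}}^*$. If $\hat{x}$ is the optimal solution of $$\operatorname*{minimize}_{x\in\mathbb{C}^n}\ \tfrac{1}{2}\|x-y\|_2^2+\tau\|x\|_{\mathcal{A}},$$ then $$\frac{1}{n}\|\hat{x}-x^\star\|_2^2\le\frac{1}{n}\left(\tau\|x^\star\|_{\mathcal{A}}-\langle x^\star,w\rangle\right)\le\frac{2\tau}{n}\|x^\star\|_{\mathcal{A}}.$$
   Context: The atomic norm is the gauge $\|x\|_{\mathcal{A}}=\inf\{t>0: x\in t\,\operatorname{conv}(\mathcal{A})\}$. The real inner product on $\mathbb{C}^n$ is $\langle x,z\rangle=\operatorname{Re}(z^*x)$. The dual atomic norm is $\|z\|_{\mathcal{A}}^*=\sup_{a\in\mathcal{A}}\langle z,a\rangle$. *)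

theory Defs
  imports "HOL-Analysis.Analysis"
begin

text \<open>C^n is modelled as complex ^ 'n (n = CARD('n)). Its inner product (from
  the vec/complex real_inner instances) is sum_i Re(x_i * cnj z_i) = Re(z^* x),
  and its norm is the Euclidean 2-norm.\<close>

definition atomic_norm :: "('a::real_vector) set \<Rightarrow> 'a \<Rightarrow> real" where
  "atomic_norm A x = Inf {t. t > 0 \<and> x \<in> (\<lambda>v. t *\<^sub>R v) ` (convex hull A)}"

definition dual_atomic_norm :: "('a::real_inner) set \<Rightarrow> 'a \<Rightarrow> real" where
  "dual_atomic_norm A z = (SUP a\<in>A. inner z a)"

end

theory Submission
  imports Defs
begin

text \<open>The estimator \<open>x\<^sub>0\<close> is the proximal point of \<open>\<tau> \<parallel>\<cdot>\<parallel>\<^sub>\<A>\<close> at \<open>y\<close>, so it satisfies the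
  variational inequality \<open>\<langle>y - x\<^sub>0, z - x\<^sub>0\<rangle> \<le> \<tau> \<parallel>z\<parallel>\<^sub>\<A> - \<tau> \<parallel>x\<^sub>0\<parallel>\<^sub>\<A>\<close>. Taking \<open>z = x\<^sup>\<star>\<close>
  gives \<open>\<parallel>x\<^sub>0 - x\<^sup>\<star>\<parallel>\<^sup>2 \<le> \<tau> \<parallel>x\<^sup>\<star>\<parallel>\<^sub>\<A> - \<langle>x\<^sup>\<star>, w\<rangle> + (\<langle>x\<^sub>0, w\<rangle> - \<tau> \<parallel>x\<^sub>0\<parallel>\<^sub>\<A>)\<close>, and the last
  bracket is nonpositive by the duality bound \<open>\<langle>x, w\<rangle> \<le> \<parallel>w\<parallel>\<^sub>\<A>\<^sup>* \<parallel>x\<parallel>\<^sub>\<A>\<close> and \<open>\<tau> > \<parallel>w\<parallel>\<^sub>\<A>\<^sup>*\<close>.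
  The same bound applied to \<open>-x\<^sup>\<star>\<close>, together with central symmetry, gives the second
  inequality.\<close>

lemma absorbing_if_ball_subset:
  fixes C :: "'a::real_normed_vector set"
  assumes "r > 0" "ball 0 r \<subseteq> C"
  shows "\<exists>t>0. x \<in> (\<lambda>v. t *\<^sub>R v) ` C"
proof -
  define t where "t = 2 * norm x / r + 1"
  have t: "t > 0" using assms by (simp add: t_def add_nonneg_pos)
  have "r * t = 2 * norm x + r" using assms by (simp add: t_def field_simps)
  then have "norm x < r * t" using assms norm_ge_zero[of x] by linarith
  then have "norm (x /\<^sub>R t) < r" using t by (simp add: field_simps)
  then have "x /\<^sub>R t \<in> C" using assms by auto
  moreover have "x = t *\<^sub>R (x /\<^sub>R t)" using t by simp
  ultimately show ?thesis using t by blast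
qed

lemma atomic_norm_nonneg:
  assumes "\<exists>t>0. x \<in> (\<lambda>v. t *\<^sub>R v) ` (convex hull A)"
  shows "atomic_norm A x \<ge> 0"
  unfolding atomic_norm_def by (rule cInf_greatest) (use assms in auto)

lemma atomic_norm_le:
  assumes "t > 0" "x \<in> (\<lambda>v. t *\<^sub>R v) ` (convex hull A)"
  shows "atomic_norm A x \<le> t"
  unfolding atomic_norm_def
  by (rule cInf_lower) (use assms in \<open>auto intro!: bdd_belowI[of _ 0]\<close>)

lemma atomic_norm_approx:
  assumes "\<exists>t>0. x \<in> (\<lambda>v. t *\<^sub>R v) ` (convex hull A)" "e > 0"
  obtains t where "t > 0" "x \<in> (\<lambda>v. t *\<^sub>R v) ` (convex hull A)" "t < atomic_norm A x + e"
proof -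
  let ?S = "{t. t > 0 \<and> x \<in> (\<lambda>v. t *\<^sub>R v) ` (convex hull A)}"
  have "Inf ?S < atomic_norm A x + e" using assms by (simp add: atomic_norm_def)
  moreover have "?S \<noteq> {}" "bdd_below ?S" using assms by (auto intro!: bdd_belowI[of _ 0])
  ultimately obtain t where "t \<in> ?S" "t < atomic_norm A x + e" by (meson cInf_lessD)
  then show thesis using that by blast
qed

lemma atomic_norm_convex_combination_le:
  fixes A :: "'a::real_vector set"
  assumes absorbing: "\<And>x. \<exists>t>0. x \<in> (\<lambda>v. t *\<^sub>R v) ` (convex hull A)"
    and s: "0 < s" "s < 1"
  shows "atomic_norm A ((1 - s) *\<^sub>R a + s *\<^sub>R b) \<le> (1 - s) * atomic_norm A a + s * atomic_norm A b"
proof (rule field_le_epsilon)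
  fix e :: real assume e: "e > 0"
  obtain t1 v1 where t1: "t1 > 0" "t1 < atomic_norm A a + e" "v1 \<in> convex hull A" "a = t1 *\<^sub>R v1"
    using atomic_norm_approx[OF absorbing e, of a] by blast
  obtain t2 v2 where t2: "t2 > 0" "t2 < atomic_norm A b + e" "v2 \<in> convex hull A" "b = t2 *\<^sub>R v2"
    using atomic_norm_approx[OF absorbing e, of b] by blast
  define T where "T = (1 - s) * t1 + s * t2"
  have T: "T > 0" using s t1 t2 by (simp add: T_def add_pos_pos)
  define v where "v = ((1 - s) * t1 / T) *\<^sub>R v1 + (s * t2 / T) *\<^sub>R v2"
  have "v \<in> convex hull A"
    unfolding v_def
  proof (rule convexD[OF convex_convex_hull t1(3) t2(3)])
    show "0 \<le> (1 - s) * t1 / T" "0 \<le> s * t2 / T" using s t1 t2 T by simp_all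
    show "(1 - s) * t1 / T + s * t2 / T = 1" using T by (simp add: T_def add_divide_distrib[symmetric])
  qed
  moreover have "(1 - s) *\<^sub>R a + s *\<^sub>R b = T *\<^sub>R v"
    using T by (simp add: v_def t1(4) t2(4) scaleR_add_right)
  ultimately have "atomic_norm A ((1 - s) *\<^sub>R a + s *\<^sub>R b) \<le> T"
    using atomic_norm_le[OF T] by auto
  also have "T \<le> (1 - s) * (atomic_norm A a + e) + s * (atomic_norm A b + e)"
    unfolding T_def using s t1 t2 by (intro add_mono mult_left_mono) auto
  finally show "atomic_norm A ((1 - s) *\<^sub>R a + s *\<^sub>R b) \<le> (1 - s) * atomic_norm A a + s * atomic_norm A b + e"
    by (simp add: algebra_simps)
qed

lemma convex_on_atomic_norm:
  assumes "\<And>x. \<exists>t>0. x \<in> (\<lambda>v. t *\<^sub>R v) ` (convex hull A)"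
  shows "convex_on UNIV (atomic_norm A)"
  by (rule convex_onI) (use atomic_norm_convex_combination_le[OF assms] in auto)

lemma atomic_norm_uminus_le:
  assumes absorbing: "\<And>x. \<exists>t>0. x \<in> (\<lambda>v. t *\<^sub>R v) ` (convex hull A)"
    and symm: "\<forall>x\<in>convex hull A. - x \<in> convex hull A"
  shows "atomic_norm A (- x) \<le> atomic_norm A x"
proof (rule field_le_epsilon)
  fix e :: real assume "e > 0"
  then obtain t v where t: "t > 0" "t < atomic_norm A x + e" "v \<in> convex hull A" "x = t *\<^sub>R v"
    using atomic_norm_approx[OF absorbing] by blast
  then have "- x \<in> (\<lambda>v. t *\<^sub>R v) ` (convex hull A)"
    using symm by (intro image_eqI[of _ _ "- v"]) auto
  then show "atomic_norm A (- x) \<le> atomic_norm A x + e"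
    using atomic_norm_le[OF t(1)] t(2) by fastforce
qed

lemma inner_le_mult_atomic_norm:
  fixes A :: "'a::real_inner set"
  assumes hull: "\<And>v. v \<in> convex hull A \<Longrightarrow> inner v w \<le> D"
    and zero: "0 \<in> convex hull A"
    and absorbing: "\<exists>t>0. x \<in> (\<lambda>v. t *\<^sub>R v) ` (convex hull A)"
  shows "inner x w \<le> D * atomic_norm A x"
proof -
  have D: "D \<ge> 0" using hull[OF zero] by simp
  have scaled: "inner x w \<le> t * D" if "t > 0" "x \<in> (\<lambda>v. t *\<^sub>R v) ` (convex hull A)" for t
    using that hull by (auto simp: mult_left_mono)
  show ?thesis
  proof (cases "D = 0")
    case True
    then show ?thesis using absorbing scaled by fastforce
  next
    case False
    then have D: "D > 0" using D by simp
    have "inner x w / D \<le> atomic_norm A x"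
      unfolding atomic_norm_def
      by (rule cInf_greatest) (use absorbing scaled D in \<open>auto simp: divide_le_eq\<close>)
    then show ?thesis using D by (simp add: divide_le_eq mult.commute)
  qed
qed

lemma inner_le_dual_atomic_norm_on_convex_hull:
  fixes A :: "'a::real_inner set"
  assumes "bounded A" "v \<in> convex hull A"
  shows "inner v w \<le> dual_atomic_norm A w"
proof -
  obtain B where B: "\<And>a. a \<in> A \<Longrightarrow> norm a \<le> B" using \<open>bounded A\<close> bounded_iff by blast
  have "bdd_above ((\<lambda>a. inner w a) ` A)"
    by (rule bdd_aboveI2[of _ _ "norm w * B"])
      (meson B mult_left_mono norm_cauchy_schwarz norm_ge_zero order_trans)
  then have "A \<subseteq> {v. inner w v \<le> dual_atomic_norm A w}"
    unfolding dual_atomic_norm_def by (auto intro: cSUP_upper)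
  then have "convex hull A \<subseteq> {v. inner w v \<le> dual_atomic_norm A w}"
    by (rule hull_minimal) (rule convex_halfspace_le)
  then show ?thesis using assms(2) by (auto simp: inner_commute)
qed

lemma inner_le_dual_atomic_norm_mult_atomic_norm:
  fixes A :: "'a::real_inner set"
  assumes "bounded A" "r > 0" "ball 0 r \<subseteq> convex hull A"
  shows "inner x w \<le> dual_atomic_norm A w * atomic_norm A x"
proof (rule inner_le_mult_atomic_norm)
  show "0 \<in> convex hull A" using assms by auto
qed (use inner_le_dual_atomic_norm_on_convex_hull[OF assms(1)]
      absorbing_if_ball_subset[OF assms(2,3)] in auto)

lemma dual_atomic_norm_nonneg:
  fixes A :: "'a::real_inner set"
  assumes "bounded A" "0 \<in> convex hull A"
  shows "0 \<le> dual_atomic_norm A w"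
  using inner_le_dual_atomic_norm_on_convex_hull[OF assms] by simp

lemma inner_le_mult_atomic_norm_if_dual_atomic_norm_le:
  fixes A :: "'a::real_inner set"
  assumes "bounded A" "r > 0" "ball 0 r \<subseteq> convex hull A" "dual_atomic_norm A w \<le> c"
  shows "inner x w \<le> c * atomic_norm A x"
  using inner_le_dual_atomic_norm_mult_atomic_norm[OF assms(1-3)]
    mult_right_mono[OF assms(4) atomic_norm_nonneg[OF absorbing_if_ball_subset[OF assms(2,3)]]]
  by (rule order_trans)

lemma prox_variational_inequality:
  fixes f :: "'a::real_inner \<Rightarrow> real"
  assumes "convex_on UNIV f"
    and minimizer: "\<And>x. (1/2) * (norm (x0 - y))\<^sup>2 + f x0 \<le> (1/2) * (norm (x - y))\<^sup>2 + f x"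
  shows "inner (y - x0) (z - x0) \<le> f z - f x0"
proof -
  define d where "d = z - x0"
  define c where "c = inner (x0 - y) d + f z - f x0"
  have "0 \<le> c + s * ((norm d)\<^sup>2 / 2)" if s: "0 < s" "s < 1" for s
  proof -
    have "f (x0 + s *\<^sub>R d) \<le> (1 - s) * f x0 + s * f z"
      using convex_onD[OF assms(1), of s x0 z] s by (simp add: d_def algebra_simps)
    moreover have "(norm (x0 + s *\<^sub>R d - y))\<^sup>2
        = (norm (x0 - y))\<^sup>2 + 2 * s * inner (x0 - y) d + s\<^sup>2 * (norm d)\<^sup>2"
      unfolding power2_norm_eq_inner
      by (simp add: inner_commute power2_eq_square algebra_simps)
    ultimately have "0 \<le> s * (c + s * ((norm d)\<^sup>2 / 2))"
      using minimizer[of "x0 + s *\<^sub>R d"] by (simp add: c_def power2_eq_square algebra_simps)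
    then show ?thesis using s by (simp add: zero_le_mult_iff)
  qed
  moreover have "((\<lambda>s. c + s * ((norm d)\<^sup>2 / 2)) \<longlongrightarrow> c) (at_right 0)"
    by (auto intro!: tendsto_eq_intros)
  ultimately have "0 \<le> c"
    by (intro tendsto_lowerbound[of _ c "at_right 0"])
      (auto simp: eventually_at_right_field intro!: exI[of _ 1])
  moreover have "inner (y - x0) d = - inner (x0 - y) d"
    by (simp add: inner_diff_left)
  ultimately show ?thesis by (simp add: c_def d_def)
qed

theorem proposition1:
  fixes A :: "(complex ^ 'n) set" and xstar w y xhat :: "complex ^ 'n" and \<tau> :: real
  assumes compact_hull: "compact (convex hull A)"
    and symm: "\<forall>x\<in>convex hull A. - x \<in> convex hull A"
    and ball: "\<exists>r>0. ball 0 r \<subseteq> convex hull A"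
    and y_def: "y = xstar + w"
    and tau: "\<tau> > dual_atomic_norm A w"
    and opt: "\<forall>x. (1/2) * (norm (xhat - y))\<^sup>2 + \<tau> * atomic_norm A xhat
                   \<le> (1/2) * (norm (x - y))\<^sup>2 + \<tau> * atomic_norm A x"
  shows "(1 / real CARD('n)) * (norm (xhat - xstar))\<^sup>2
           \<le> (1 / real CARD('n)) * (\<tau> * atomic_norm A xstar - inner xstar w)
         \<and> (1 / real CARD('n)) * (\<tau> * atomic_norm A xstar - inner xstar w)
           \<le> (2 * \<tau> / real CARD('n)) * atomic_norm A xstar"
proof -
  let ?N = "atomic_norm A"
  obtain r where r: "r > 0" "ball 0 r \<subseteq> convex hull A" using ball by blast
  have absorbing: "\<And>x. \<exists>t>0. x \<in> (\<lambda>v. t *\<^sub>R v) ` (convex hull A)"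
    using absorbing_if_ball_subset[OF r] by blast
  have "bounded A"
    using bounded_subset[OF compact_imp_bounded[OF compact_hull] hull_subset] .
  have "0 \<in> convex hull A" using r by auto
  from dual_atomic_norm_nonneg[OF \<open>bounded A\<close> this, of w] tau
  have tau_nonneg: "0 \<le> \<tau>" by linarith
  have duality: "inner x w \<le> \<tau> * ?N x" for x
    using inner_le_mult_atomic_norm_if_dual_atomic_norm_le[OF \<open>bounded A\<close> r less_imp_le[OF tau]] .
  have "convex_on UNIV (\<lambda>x. \<tau> * ?N x)"
    using convex_on_cmul[OF tau_nonneg convex_on_atomic_norm[OF absorbing]] .
  from prox_variational_inequality[OF this, of xhat y xstar] opt
  have "inner (xstar + w - xhat) (xstar - xhat) \<le> \<tau> * ?N xstar - \<tau> * ?N xhat"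
    by (simp add: y_def)
  moreover have "inner (xstar + w - xhat) (xstar - xhat)
      = (norm (xhat - xstar))\<^sup>2 + inner xstar w - inner xhat w"
    by (simp add: power2_norm_eq_inner inner_commute algebra_simps norm_minus_commute[of xhat])
  ultimately have first: "(norm (xhat - xstar))\<^sup>2 \<le> \<tau> * ?N xstar - inner xstar w"
    using duality[of xhat] by linarith
  have "- inner xstar w \<le> \<tau> * ?N xstar"
    using duality[of "- xstar"] mult_left_mono[OF atomic_norm_uminus_le[OF absorbing symm, of xstar] tau_nonneg]
    by simp
  then have second: "\<tau> * ?N xstar - inner xstar w \<le> 2 * \<tau> * ?N xstar" by linarith
  have "0 \<le> 1 / real CARD('n)" by simp
  from mult_left_mono[OF first this] mult_left_mono[OF second this]
  show ?thesis by simp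
qed

end
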